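(* Let $M$ be a point-line configuration of rank $3$ on $[d]$, and let $x,x_1,\dots,x_n$ be $3$-element subsets of $[d]$ not belonging to $\mathcal{C}_3(M)$. (i) If $N$ is a point-line configuration on $[d]$ with $N\ge M$, then $N\ge M^x$ if and only if $x\in\mathcal{C}_3(N)$. (ii) Suppose that $x_{i+1}\in\mathcal{C}_3(M^{x_i})$ for every $i\in[n]$, where $x_{n+1}:=x_1$, and that every $y\in\mathcal{C}_3(M^{x_n})$ belongs to $\mathcal{C}_3(M)\cup\{x_1,\dots,x_n\}$. Then $M^{x_n}$ is a minimal element (for the dependency order) of the set $\mathcal{B}=\{N \text{ matroid on }[d]: N>M,\ \mathcal{C}_1(N)=\emptyset,\ \mathcal{C}_2(N)=\emptyset\}$.
   Context: A matroid $N$ on $[d]$ has dependent sets $\mathcal{D}(N)$ and circuits $\mathcal{C}(N)$; $\mathcal{C}_i(N)$ is the set of circuits of size $i$. A point-line configuration on $[d]$ is a simple matroid (no circuits of size $1$ or $2$) of rank at most $3$; its lines are the maximal subsets of size $\ge3$ and rank $2$, and a $3$-subset is dependent (equivalently a circuit) iff it lies in a line. Dependency order: $N_1\le N_2$ iff $\mathcal{D}(N_1)\subseteq\mathcal{D}(N_2)$; $N_1<N_2$ iff moreover $N_1\neq N_2$. For a $3$-subset $x\notin\mathcal{C}_3(M)$, $M^x$ denotes the unique minimal (for the dependency order) point-line configuration on $[d]$ in which every $3$-subset of every line of $M$ is dependent and $x$ is dependent. *)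

theory Defs
  imports Main
begin

text \<open>A matroid on [d] = {1..d} is represented by its family of independent sets.\<close>

definition matroid :: "nat \<Rightarrow> nat set set \<Rightarrow> bool" where
  "matroid d N \<longleftrightarrow>
     N \<subseteq> Pow {1..d} \<and> {} \<in> N \<and>
     (\<forall>X\<in>N. \<forall>Y. Y \<subseteq> X \<longrightarrow> Y \<in> N) \<and>
     (\<forall>X\<in>N. \<forall>Y\<in>N. card X < card Y \<longrightarrow> (\<exists>e\<in>Y - X. insert e X \<in> N))"

definition dependents :: "nat \<Rightarrow> nat set set \<Rightarrow> nat set set" where
  "dependents d N = {X. X \<subseteq> {1..d} \<and> X \<notin> N}"

definition circuits :: "nat \<Rightarrow> nat set set \<Rightarrow> nat set set" where
  "circuits d N = {C \<in> dependents d N. \<forall>Y. Y \<subset> C \<longrightarrow> Y \<notin> dependents d N}"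

definition circuits_size :: "nat \<Rightarrow> nat set set \<Rightarrow> nat \<Rightarrow> nat set set" where
  "circuits_size d N i = {C \<in> circuits d N. card C = i}"

definition mrank :: "nat set set \<Rightarrow> nat set \<Rightarrow> nat" where
  "mrank N X = Max (card ` {I \<in> N. I \<subseteq> X})"

definition point_line_config :: "nat \<Rightarrow> nat set set \<Rightarrow> bool" where
  "point_line_config d N \<longleftrightarrow> matroid d N \<and> circuits_size d N 1 = {} \<and>
     circuits_size d N 2 = {} \<and> mrank N {1..d} \<le> 3"

definition lines :: "nat \<Rightarrow> nat set set \<Rightarrow> nat set set" where
  "lines d N = {L. L \<subseteq> {1..d} \<and> card L \<ge> 3 \<and> mrank N L = 2 \<and>
     (\<forall>L'. L \<subset> L' \<and> L' \<subseteq> {1..d} \<and> card L' \<ge> 3 \<longrightarrow> mrank N L' \<noteq> 2)}"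

definition dep_le :: "nat \<Rightarrow> nat set set \<Rightarrow> nat set set \<Rightarrow> bool" where
  "dep_le d N1 N2 \<longleftrightarrow> dependents d N1 \<subseteq> dependents d N2"

definition dep_lt :: "nat \<Rightarrow> nat set set \<Rightarrow> nat set set \<Rightarrow> bool" where
  "dep_lt d N1 N2 \<longleftrightarrow> dep_le d N1 N2 \<and> N1 \<noteq> N2"

definition minimal_in :: "nat \<Rightarrow> nat set set \<Rightarrow> nat set set set \<Rightarrow> bool" where
  "minimal_in d N S \<longleftrightarrow> N \<in> S \<and> \<not> (\<exists>N'\<in>S. dep_lt d N' N)"

text \<open>The candidates for M^x, and M^x itself as the unique minimal one.\<close>
definition ext_candidates :: "nat \<Rightarrow> nat set set \<Rightarrow> nat set \<Rightarrow> nat set set set" where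
  "ext_candidates d M x = {N. point_line_config d N \<and>
     (\<forall>L\<in>lines d M. \<forall>T. T \<subseteq> L \<and> card T = 3 \<longrightarrow> T \<in> dependents d N) \<and>
     x \<in> dependents d N}"

definition ext :: "nat \<Rightarrow> nat set set \<Rightarrow> nat set \<Rightarrow> nat set set" where
  "ext d M x = (THE N. minimal_in d N (ext_candidates d M x))"

end

theory Submission
  imports Defs
begin

text \<open>Dependent triples of a point-line configuration are closed under the collinearity axiom,
  and conversely every family of triples with that property is the set of dependent triples of a
  point-line configuration. Hence \<open>M\<^sup>x\<close> exists explicitly: its dependent triples are those
  dependent in every candidate, and it lies below each of them. So a configuration \<open>N \<ge> M\<close> lies
  above \<open>M\<^sup>x\<close> exactly when it is a candidate, i.e. when \<open>x\<close> is dependent in \<open>N\<close>, which is (i).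
  For (ii), a configuration strictly between \<open>M\<close> and \<open>M\<^bsup>x\<^sub>n\<^esub>\<close> has a new dependent triple,
  which must be some \<open>x\<^sub>i\<close>; by (i) dependence then propagates along \<open>x\<^sub>i, \<dots>, x\<^sub>n\<close>,
  forcing the configuration above \<open>M\<^bsup>x\<^sub>n\<^esub>\<close>.\<close>

text \<open>The collinearity axiom for the dependent triples of a point-line configuration: two
  lines sharing two points coincide.\<close>

definition line_closed :: "'a set set \<Rightarrow> bool" where
  "line_closed T \<longleftrightarrow>
     (\<forall>a b c e. distinct [a, b, c, e] \<longrightarrow> {a, b, c} \<in> T \<longrightarrow> {a, b, e} \<in> T \<longrightarrow> {a, c, e} \<in> T)"

lemma line_closedD:
  assumes "line_closed T" "distinct [a, b, c, e]" "{a, b, c} \<in> T" "{a, b, e} \<in> T"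
  shows "{a, c, e} \<in> T"
  using assms unfolding line_closed_def by blast

lemma line_closed_Inter: "(\<And>T. T \<in> F \<Longrightarrow> line_closed T) \<Longrightarrow> line_closed (\<Inter> F)"
  unfolding line_closed_def by blast

lemma line_closed_pencil:
  assumes "line_closed T" "distinct [a, b, f, g]" "{a, b, f} \<in> T" "{a, b, g} \<in> T"
  shows "{a, f, g} \<in> T" "{b, f, g} \<in> T"
proof -
  show "{a, f, g} \<in> T" using line_closedD[OF assms] .
  have "{b, a, f} = {a, b, f}" "{b, a, g} = {a, b, g}" by auto
  with assms(3,4) have "{b, a, f} \<in> T" "{b, a, g} \<in> T" by simp_all
  moreover have "distinct [b, a, f, g]" using assms(2) by auto
  ultimately show "{b, f, g} \<in> T" using line_closedD[OF assms(1)] by blast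
qed

lemma line_closed_collinear_triple:
  assumes T: "line_closed T" and "a \<noteq> b" and uvw: "distinct [u, v, w]" and "b \<notin> {u, v, w}"
    and pencil: "\<And>f. f \<in> {u, v, w} - {a, b} \<Longrightarrow> {a, b, f} \<in> T"
  shows "{u, v, w} \<in> T"
proof (cases "a \<in> {u, v, w}")
  case True
  then obtain p q where "{u, v, w} = {a, p, q}" "distinct [a, b, p, q]"
    using assms(2,4) uvw by auto
  with pencil line_closed_pencil(1)[OF T, of a b p q] show ?thesis by auto
next
  case False
  then have "{a, u, v} \<in> T" "{a, u, w} \<in> T"
    using pencil line_closed_pencil(1)[OF T] assms(2,4) uvw by auto
  then show ?thesis
    using line_closed_pencil(2)[OF T, of a u v w] False uvw by auto
qed

lemma line_closed_augment:
  assumes "line_closed T" "a \<noteq> b" "distinct [u, v, w]" "{u, v, w} \<notin> T"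
    and "\<not> {a, b} \<subseteq> {u, v, w}"
  shows "\<exists>f\<in>{u, v, w} - {a, b}. insert f {a, b} \<notin> T"
proof (rule ccontr)
  assume none: "\<not> ?thesis"
  have pencil: "{a, b, f} \<in> T" "{b, a, f} \<in> T" if "f \<in> {u, v, w} - {a, b}" for f
  proof -
    have "insert f {a, b} \<in> T" using none that by blast
    moreover have "insert f {a, b} = {a, b, f}" "insert f {a, b} = {b, a, f}" by auto
    ultimately show "{a, b, f} \<in> T" "{b, a, f} \<in> T" by metis+
  qed
  have "b \<notin> {u, v, w} \<or> a \<notin> {u, v, w}" using assms(5) by blast
  then show False
  proof (elim disjE)
    assume "b \<notin> {u, v, w}"
    from this pencil(1) have "{u, v, w} \<in> T" by (rule line_closed_collinear_triple[OF assms(1-3)])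
    with assms(4) show False ..
  next
    assume "a \<notin> {u, v, w}"
    with pencil(2) assms(2) have "{u, v, w} \<in> T"
      by (intro line_closed_collinear_triple[OF assms(1) _ assms(3), of b a]) auto
    with assms(4) show False ..
  qed
qed

lemma finite_indep_subsets: "finite X \<Longrightarrow> finite {I \<in> N. I \<subseteq> X}"
  by (rule finite_subset[of _ "Pow X"]) auto

lemma mrank_le:
  assumes "finite X" "{} \<in> N" "\<And>I. I \<in> N \<Longrightarrow> I \<subseteq> X \<Longrightarrow> card I \<le> k"
  shows "mrank N X \<le> k"
  unfolding mrank_def using assms finite_indep_subsets[OF assms(1), of N]
  by (subst Max_le_iff) blast+

lemma card_le_mrank:
  assumes "finite X" "I \<in> N" "I \<subseteq> X"
  shows "card I \<le> mrank N X"
  unfolding mrank_def using assms finite_indep_subsets[OF assms(1), of N] by (intro Max_ge) blast+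

lemma circuits_size_dependent: "C \<in> circuits_size d N k \<Longrightarrow> C \<in> dependents d N"
  unfolding circuits_size_def circuits_def by blast

lemma dependent_contains_circuit:
  assumes "X \<in> dependents d N" "finite X"
  shows "\<exists>C\<in>circuits d N. C \<subseteq> X"
proof -
  obtain C where C: "C \<subseteq> X" "C \<in> dependents d N"
    and least: "\<And>Y. Y \<subseteq> X \<and> Y \<in> dependents d N \<Longrightarrow> card C \<le> card Y"
    using ex_has_least_nat[of "\<lambda>Y. Y \<subseteq> X \<and> Y \<in> dependents d N" X card] assms(1) by blast
  have "finite C" using C(1) assms(2) finite_subset by blast
  then have "Y \<notin> dependents d N" if "Y \<subset> C" for Y
    using that least[of Y] C(1) psubset_card_mono[of C Y] by fastforce
  with C show ?thesis unfolding circuits_def by blast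
qed

lemma matroid_eqI_dependents:
  assumes "matroid d A" "matroid d B" "dependents d A = dependents d B"
  shows "A = B"
proof -
  have "A \<subseteq> Pow {1..d}" "B \<subseteq> Pow {1..d}" using assms(1,2) unfolding matroid_def by simp_all
  with assms(3) show ?thesis unfolding dependents_def by blast
qed

lemma dep_le_antisym: "matroid d A \<Longrightarrow> matroid d B \<Longrightarrow> dep_le d A B \<Longrightarrow> dep_le d B A \<Longrightarrow> A = B"
  unfolding dep_le_def by (rule matroid_eqI_dependents) auto

lemma the_minimal_in_eqI:
  assumes "P \<in> S" "\<And>N. N \<in> S \<Longrightarrow> dep_le d P N" "\<And>N. N \<in> S \<Longrightarrow> matroid d N"
  shows "(THE N. minimal_in d N S) = P"
proof (rule the_equality)
  show "minimal_in d P S"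
    using assms dep_le_antisym unfolding minimal_in_def dep_lt_def by metis
next
  fix Q assume "minimal_in d Q S"
  with assms(1,2) show "Q = P" unfolding minimal_in_def dep_lt_def by blast
qed

definition triple_matroid :: "nat \<Rightarrow> nat set set \<Rightarrow> nat set set" where
  "triple_matroid d T = {X. X \<subseteq> {1..d} \<and> (card X \<le> 2 \<or> card X = 3 \<and> X \<notin> T)}"

lemma dependents_triple_matroid:
  "X \<in> dependents d (triple_matroid d T) \<longleftrightarrow>
     X \<subseteq> {1..d} \<and> (4 \<le> card X \<or> card X = 3 \<and> X \<in> T)"
  unfolding dependents_def triple_matroid_def by (simp add: not_le) linarith

lemma matroid_triple_matroid:
  assumes T: "line_closed T"
  shows "matroid d (triple_matroid d T)"
  unfolding matroid_def
proof (intro conjI ballI allI impI)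
  show "triple_matroid d T \<subseteq> Pow {1..d}" "{} \<in> triple_matroid d T"
    unfolding triple_matroid_def by auto
next
  fix X Y assume X: "X \<in> triple_matroid d T" and "Y \<subseteq> X"
  moreover have "finite X" using X finite_subset unfolding triple_matroid_def by blast
  ultimately have "Y \<subseteq> {1..d}" "card Y \<le> card X" "card Y = card X \<Longrightarrow> Y = X"
    using card_mono card_subset_eq unfolding triple_matroid_def by blast+
  with X show "Y \<in> triple_matroid d T" unfolding triple_matroid_def by fastforce
next
  fix X Y assume X: "X \<in> triple_matroid d T" and Y: "Y \<in> triple_matroid d T"
    and lt: "card X < card Y"
  have XY: "X \<subseteq> {1..d}" "Y \<subseteq> {1..d}" "card Y \<le> 3"
    using X Y unfolding triple_matroid_def by auto
  then have fin: "finite X" "finite Y" using finite_subset by blast+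
  with lt obtain e where e: "e \<in> Y - X" by (metis Diff_eq_empty_iff card_mono leD all_not_in_conv)
  show "\<exists>e\<in>Y - X. insert e X \<in> triple_matroid d T"
  proof (cases "card X \<le> 1")
    case True
    with e XY fin show ?thesis unfolding triple_matroid_def by (intro bexI[OF _ e]) auto
  next
    case False
    then have cX: "card X = 2" and Y3: "card Y = 3" "Y \<notin> T"
      using lt XY(3) Y unfolding triple_matroid_def by auto
    show ?thesis
    proof (cases "X \<subseteq> Y")
      case True
      with e fin cX Y3(1) have "insert e X = Y" by (intro card_subset_eq) auto
      with e Y show ?thesis by auto
    next
      case False
      obtain a b where ab: "X = {a, b}" "a \<noteq> b" using cX card_2_iff by metis
      obtain u v w where uvw: "Y = {u, v, w}" "distinct [u, v, w]"
        using Y3(1) card_3_iff by (metis distinct_length_2_or_more distinct_singleton)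
      obtain f where f: "f \<in> Y - X" "insert f X \<notin> T"
        using line_closed_augment[OF T ab(2) uvw(2)] False Y3(2) ab(1) uvw(1) by blast
      with cX fin XY show ?thesis unfolding triple_matroid_def by (intro bexI[OF _ f(1)]) auto
    qed
  qed
qed

lemma point_line_config_triple_matroid:
  assumes "line_closed T"
  shows "point_line_config d (triple_matroid d T)"
proof -
  have "circuits_size d (triple_matroid d T) k = {}" if "k \<le> 2" for k
    using that circuits_size_dependent[of _ d "triple_matroid d T" k]
    by (auto simp: dependents_triple_matroid circuits_size_def)
  moreover have "mrank (triple_matroid d T) {1..d} \<le> 3"
    by (rule mrank_le) (auto simp: triple_matroid_def)
  ultimately show ?thesis
    unfolding point_line_config_def using matroid_triple_matroid[OF assms] by simp
qed

lemma point_line_config_indep_if_card_le2: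
  assumes N: "point_line_config d N" and X: "X \<subseteq> {1..d}" "card X \<le> 2"
  shows "X \<in> N"
proof (rule ccontr)
  assume "X \<notin> N"
  have fin: "finite X" using X(1) finite_subset by blast
  with X(1) \<open>X \<notin> N\<close> obtain C where C: "C \<in> circuits d N" "C \<subseteq> X"
    using dependent_contains_circuit unfolding dependents_def by blast
  have "{} \<in> N" using N unfolding point_line_config_def matroid_def by blast
  then have "C \<noteq> {}" using C(1) unfolding circuits_def dependents_def by blast
  with C(2) fin have "0 < card C" by (simp add: card_gt_0_iff finite_subset)
  moreover have "card C \<le> card X" using C(2) fin by (rule card_mono[rotated])
  ultimately have "card C = 1 \<or> card C = 2" using X(2) by linarith
  with C(1) have "C \<in> circuits_size d N 1 \<or> C \<in> circuits_size d N 2"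
    unfolding circuits_size_def by blast
  with N show False unfolding point_line_config_def by blast
qed

lemma point_line_config_dependent_if_card_ge4:
  assumes N: "point_line_config d N" and X: "X \<subseteq> {1..d}" "4 \<le> card X"
  shows "X \<notin> N"
proof
  assume "X \<in> N"
  then have "card X \<le> mrank N {1..d}" using card_le_mrank X(1) by blast
  with N X(2) show False unfolding point_line_config_def by linarith
qed

lemma point_line_config_circuit3_iff:
  assumes N: "point_line_config d N" and X: "X \<subseteq> {1..d}" "card X = 3"
  shows "X \<in> circuits_size d N 3 \<longleftrightarrow> X \<notin> N"
proof
  assume "X \<notin> N"
  have "finite X" using X(1) finite_subset by blast
  then have "Y \<in> N" if "Y \<subset> X" for Y
    using that X psubset_card_mono[of X Y] by (intro point_line_config_indep_if_card_le2[OF N]) auto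
  with X \<open>X \<notin> N\<close> show "X \<in> circuits_size d N 3"
    unfolding circuits_size_def circuits_def dependents_def by blast
next
  assume "X \<in> circuits_size d N 3"
  then show "X \<notin> N" using circuits_size_dependent unfolding dependents_def by blast
qed

lemma line_closed_dependents:
  assumes N: "point_line_config d N"
  shows "line_closed (dependents d N)"
  unfolding line_closed_def
proof (intro allI impI)
  fix a b c e :: nat
  assume dist: "distinct [a, b, c, e]"
    and abc: "{a, b, c} \<in> dependents d N" and abe: "{a, b, e} \<in> dependents d N"
  then have sub: "{a, b, c, e} \<subseteq> {1..d}" unfolding dependents_def by blast
  show "{a, c, e} \<in> dependents d N"
  proof (rule ccontr)
    assume "{a, c, e} \<notin> dependents d N"
    with sub have ace: "{a, c, e} \<in> N" unfolding dependents_def by blast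
    have "card {a, b} \<le> 2" by (simp add: card_insert_if)
    with sub have "{a, b} \<in> N" by (intro point_line_config_indep_if_card_le2[OF N]) auto
    moreover have "card {a, b} < card {a, c, e}" using dist by simp
    moreover have "\<forall>X\<in>N. \<forall>Y\<in>N. card X < card Y \<longrightarrow> (\<exists>e\<in>Y - X. insert e X \<in> N)"
      using N unfolding point_line_config_def matroid_def by blast
    ultimately obtain f where "f \<in> {a, c, e} - {a, b}" "insert f {a, b} \<in> N"
      using ace by blast
    then have "{a, b, c} \<in> N \<or> {a, b, e} \<in> N"
      by (metis DiffE insertE insertCI insert_commute singletonD)
    with abc abe show False unfolding dependents_def by blast
  qed
qed

lemma point_line_config_if_dep_le:
  assumes M: "point_line_config d M" and "dep_le d M N"
    and N: "matroid d N" "circuits_size d N 1 = {}" "circuits_size d N 2 = {}"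
  shows "point_line_config d N"
proof -
  have "card I \<le> 3" if "I \<in> N" "I \<subseteq> {1..d}" for I
  proof (rule ccontr)
    assume "\<not> card I \<le> 3"
    with that(2) have "I \<in> dependents d M"
      using point_line_config_dependent_if_card_ge4[OF M] unfolding dependents_def by simp
    with \<open>dep_le d M N\<close> that(1) show False unfolding dep_le_def dependents_def by blast
  qed
  then have "mrank N {1..d} \<le> 3"
    using N(1) unfolding matroid_def by (intro mrank_le) auto
  with N show ?thesis unfolding point_line_config_def by blast
qed

lemma dep_lt_new_dependent_triple:
  assumes M: "point_line_config d M" and N: "point_line_config d N" and "dep_lt d M N"
  obtains y where "y \<subseteq> {1..d}" "card y = 3" "y \<in> M" "y \<notin> N"
proof -
  have "\<not> dep_le d N M"
    using assms dep_le_antisym unfolding point_line_config_def dep_lt_def by metis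
  then obtain y where y: "y \<subseteq> {1..d}" "y \<in> M" "y \<notin> N" unfolding dep_le_def dependents_def by blast
  moreover have "\<not> card y \<le> 2" using point_line_config_indep_if_card_le2[OF N] y by blast
  moreover have "\<not> 4 \<le> card y" using point_line_config_dependent_if_card_ge4[OF M] y by blast
  ultimately show ?thesis using that by simp
qed

lemma mrank_dependent_triple:
  assumes M: "point_line_config d M" and T: "T \<subseteq> {1..d}" "card T = 3" "T \<notin> M"
  shows "mrank M T = 2"
proof (rule antisym)
  have fin: "finite T" using T(1) finite_subset by blast
  show "mrank M T \<le> 2"
  proof (rule mrank_le[OF fin])
    show "{} \<in> M" using M unfolding point_line_config_def matroid_def by blast
    fix I assume "I \<in> M" "I \<subseteq> T"
    with T(3) have "I \<subset> T" by blast
    then have "card I < card T" by (rule psubset_card_mono[OF fin])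
    with T(2) show "card I \<le> 2" by simp
  qed
  obtain p q r where pqr: "T = {p, q, r}" "p \<noteq> q" using T(2) card_3_iff by metis
  then have pq: "card {p, q} = 2" "{p, q} \<subseteq> T" by auto
  with T(1) have "{p, q} \<in> M" by (intro point_line_config_indep_if_card_le2[OF M]) auto
  with pq show "2 \<le> mrank M T" using card_le_mrank[OF fin] by metis
qed

lemma dependent_triple_subset_line:
  assumes M: "point_line_config d M" and T: "T \<subseteq> {1..d}" "card T = 3" "T \<notin> M"
  shows "\<exists>L\<in>lines d M. T \<subseteq> L"
proof -
  define S where "S = {L. T \<subseteq> L \<and> L \<subseteq> {1..d} \<and> mrank M L = 2}"
  have "finite S" unfolding S_def by (rule finite_subset[of _ "Pow {1..d}"]) auto
  moreover have "T \<in> S" unfolding S_def using T mrank_dependent_triple[OF M T] by blast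
  ultimately have "\<exists>L\<in>S. T \<subseteq> L \<and> (\<forall>L'\<in>S. L \<subseteq> L' \<longrightarrow> L = L')"
    by (rule finite_has_maximal2)
  then obtain L where L: "L \<in> S" "T \<subseteq> L" and max: "\<forall>L'\<in>S. L \<subseteq> L' \<longrightarrow> L = L'"
    by blast
  have "finite L" using L(1) finite_subset[of L "{1..d}"] unfolding S_def by blast
  with L(2) T(2) have "3 \<le> card L" using card_mono by metis
  moreover have "mrank M L' \<noteq> 2" if "L \<subset> L'" "L' \<subseteq> {1..d}" for L'
    using that L(2) max unfolding S_def by blast
  ultimately have "L \<in> lines d M" using L(1) unfolding lines_def S_def by blast
  with L(2) show ?thesis by blast
qed

lemma line_triple_dependent:
  assumes L: "L \<in> lines d M" and T: "T \<subseteq> L" "card T = 3"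
  shows "T \<in> dependents d M"
proof -
  have Ld: "L \<subseteq> {1..d}" and r: "mrank M L = 2" using L unfolding lines_def by simp_all
  have "T \<notin> M"
  proof
    assume "T \<in> M"
    then have "card T \<le> mrank M L" using card_le_mrank finite_subset[OF Ld] T(1) by blast
    with r T(2) show False by simp
  qed
  with T(1) Ld show ?thesis unfolding dependents_def by blast
qed

definition candidate_dependents :: "nat \<Rightarrow> nat set set \<Rightarrow> nat set \<Rightarrow> nat set set" where
  "candidate_dependents d M x = \<Inter> (dependents d ` ext_candidates d M x)"

lemma ext_least_candidate:
  assumes x: "x \<subseteq> {1..d}" "card x = 3"
  shows "ext d M x \<in> ext_candidates d M x"
    and "N \<in> ext_candidates d M x \<Longrightarrow> dep_le d (ext d M x) N"
proof -
  let ?P = "triple_matroid d (candidate_dependents d M x)"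
  have plc: "point_line_config d N" if "N \<in> ext_candidates d M x" for N
    using that unfolding ext_candidates_def by blast
  have "line_closed (candidate_dependents d M x)"
    unfolding candidate_dependents_def using line_closed_dependents[OF plc] by (intro line_closed_Inter) blast
  then have P: "point_line_config d ?P" by (rule point_line_config_triple_matroid)
  have in_triples: "T \<in> candidate_dependents d M x" if "\<forall>N\<in>ext_candidates d M x. T \<in> dependents d N" for T
    using that unfolding candidate_dependents_def by blast
  have cand: "?P \<in> ext_candidates d M x"
    unfolding ext_candidates_def
  proof (intro CollectI conjI P ballI allI impI)
    fix L T assume "L \<in> lines d M" "T \<subseteq> L \<and> card T = 3"
    moreover from this have "T \<subseteq> {1..d}" unfolding lines_def by blast
    ultimately show "T \<in> dependents d ?P"
      unfolding dependents_triple_matroid using in_triples unfolding ext_candidates_def by blast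
  next
    show "x \<in> dependents d ?P"
      unfolding dependents_triple_matroid using x in_triples unfolding ext_candidates_def by blast
  qed
  have least: "dep_le d ?P N" if N: "N \<in> ext_candidates d M x" for N
    unfolding dep_le_def
  proof
    fix X assume "X \<in> dependents d ?P"
    then have X: "X \<subseteq> {1..d}" "4 \<le> card X \<or> card X = 3 \<and> X \<in> candidate_dependents d M x"
      unfolding dependents_triple_matroid by blast+
    with point_line_config_dependent_if_card_ge4[OF plc[OF N]] N
    show "X \<in> dependents d N" unfolding candidate_dependents_def dependents_def by blast
  qed
  have "ext d M x = ?P"
    unfolding ext_def using cand least plc point_line_config_def by (intro the_minimal_in_eqI) auto
  with cand least show "ext d M x \<in> ext_candidates d M x"
    "N \<in> ext_candidates d M x \<Longrightarrow> dep_le d (ext d M x) N" by simp_all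
qed

lemma dep_le_ext:
  assumes M: "point_line_config d M" and x: "x \<subseteq> {1..d}" "card x = 3"
  shows "dep_le d M (ext d M x)"
  unfolding dep_le_def
proof
  fix X assume "X \<in> dependents d M"
  then have X: "X \<subseteq> {1..d}" "X \<notin> M" unfolding dependents_def by blast+
  have E: "ext d M x \<in> ext_candidates d M x" by (rule ext_least_candidate(1)[OF x])
  consider "card X \<le> 2" | "card X = 3" | "4 \<le> card X" by linarith
  then show "X \<in> dependents d (ext d M x)"
  proof cases
    case 1
    with X show ?thesis using point_line_config_indep_if_card_le2[OF M] by blast
  next
    case 2
    with E show ?thesis using dependent_triple_subset_line[OF M X(1) 2 X(2)]
      unfolding ext_candidates_def by blast
  next
    case 3
    have "point_line_config d (ext d M x)" using E unfolding ext_candidates_def by blast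
    with X(1) 3 show ?thesis using point_line_config_dependent_if_card_ge4
      unfolding dependents_def by blast
  qed
qed

lemma dep_le_ext_iff:
  assumes x: "x \<subseteq> {1..d}" "card x = 3" and N: "point_line_config d N" "dep_le d M N"
  shows "dep_le d (ext d M x) N \<longleftrightarrow> x \<in> circuits_size d N 3"
proof
  assume "dep_le d (ext d M x) N"
  moreover have "x \<in> dependents d (ext d M x)"
    using ext_least_candidate(1)[OF x] unfolding ext_candidates_def by blast
  ultimately have "x \<notin> N" unfolding dep_le_def dependents_def by blast
  with point_line_config_circuit3_iff[OF N(1) x] show "x \<in> circuits_size d N 3" by blast
next
  assume "x \<in> circuits_size d N 3"
  then have "x \<in> dependents d N" by (rule circuits_size_dependent)
  moreover have "T \<in> dependents d N" if "L \<in> lines d M" "T \<subseteq> L" "card T = 3" for L T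
    using line_triple_dependent[OF that] N(2) unfolding dep_le_def by blast
  ultimately have "N \<in> ext_candidates d M x" using N(1) unfolding ext_candidates_def by blast
  then show "dep_le d (ext d M x) N" by (rule ext_least_candidate(2)[OF x])
qed

lemma ext_chain_dependent:
  assumes M: "point_line_config d M" and N: "point_line_config d N" "dep_le d M N"
    and xs: "\<And>i. i \<in> {1..n} \<Longrightarrow> xs i \<subseteq> {1..d} \<and> card (xs i) = 3"
    and chain: "\<And>i. i \<in> {1..<n} \<Longrightarrow> xs (Suc i) \<in> circuits_size d (ext d M (xs i)) 3"
    and i: "i \<in> {1..n}" "xs i \<notin> N"
  shows "xs n \<notin> N"
proof -
  from i(1) have "i \<le> n" by simp
  then show ?thesis
  proof (induction rule: dec_induct)
    case base
    show ?case by (rule i(2))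
  next
    case (step k)
    with i(1) have k: "k \<in> {1..n}" "k \<in> {1..<n}" by auto
    with step.IH have "xs k \<in> circuits_size d N 3"
      using point_line_config_circuit3_iff[OF N(1)] xs by blast
    then have "dep_le d (ext d M (xs k)) N" using dep_le_ext_iff[OF _ _ N] xs[OF k(1)] by blast
    moreover have "xs (Suc k) \<in> dependents d (ext d M (xs k))"
      using chain[OF k(2)] by (rule circuits_size_dependent)
    ultimately show ?case unfolding dep_le_def dependents_def by blast
  qed
qed

lemma ext_minimal_in:
  assumes M: "point_line_config d M" and n: "1 \<le> n"
    and xs: "\<And>i. i \<in> {1..n} \<Longrightarrow> xs i \<subseteq> {1..d} \<and> card (xs i) = 3"
    and xn: "xs n \<notin> circuits_size d M 3"
    and chain: "\<And>i. i \<in> {1..<n} \<Longrightarrow> xs (Suc i) \<in> circuits_size d (ext d M (xs i)) 3"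
    and closure: "\<And>y. y \<in> circuits_size d (ext d M (xs n)) 3 \<Longrightarrow> y \<in> circuits_size d M 3 \<union> xs ` {1..n}"
  shows "minimal_in d (ext d M (xs n))
    {N. matroid d N \<and> dep_lt d M N \<and> circuits_size d N 1 = {} \<and> circuits_size d N 2 = {}}"
    (is "minimal_in d ?E ?B")
proof -
  from n xs have x: "xs n \<subseteq> {1..d}" "card (xs n) = 3" by auto
  then have E: "?E \<in> ext_candidates d M (xs n)" by (rule ext_least_candidate(1))
  then have E_plc: "point_line_config d ?E" and "xs n \<notin> ?E"
    unfolding ext_candidates_def dependents_def by blast+
  moreover have "xs n \<in> M" using point_line_config_circuit3_iff[OF M x] xn by blast
  ultimately have "?E \<in> ?B"
    using dep_le_ext[OF M x] unfolding point_line_config_def dep_lt_def by blast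
  moreover have "\<not> dep_lt d N ?E" if N: "N \<in> ?B" for N
  proof
    assume lt: "dep_lt d N ?E"
    from N have N_le: "dep_le d M N" and "dep_lt d M N" unfolding dep_lt_def by blast+
    from N have N_plc: "point_line_config d N"
      by (intro point_line_config_if_dep_le[OF M N_le]) blast+
    obtain y where y: "y \<subseteq> {1..d}" "card y = 3" "y \<in> M" "y \<notin> N"
      using dep_lt_new_dependent_triple[OF M N_plc \<open>dep_lt d M N\<close>] by blast
    from y(1,4) lt have "y \<notin> ?E" unfolding dep_lt_def dep_le_def dependents_def by blast
    then have "y \<in> circuits_size d ?E 3" using point_line_config_circuit3_iff[OF E_plc y(1,2)] by blast
    moreover have "y \<notin> circuits_size d M 3" using point_line_config_circuit3_iff[OF M y(1,2)] y(3) by blast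
    ultimately obtain i where "i \<in> {1..n}" "xs i \<notin> N" using closure y(4) by blast
    then have "xs n \<notin> N" using ext_chain_dependent[where xs = xs and n = n, OF M N_plc N_le xs chain] by blast
    then have "dep_le d ?E N"
      using dep_le_ext_iff[OF x N_plc N_le] point_line_config_circuit3_iff[OF N_plc x] by blast
    with lt E_plc N_plc show False using dep_le_antisym unfolding dep_lt_def point_line_config_def by blast
  qed
  ultimately show ?thesis unfolding minimal_in_def by blast
qed

theorem mainTheorem7:
  fixes d n :: nat and M :: "nat set set" and x :: "nat set" and xs :: "nat \<Rightarrow> nat set"
  assumes plcM: "point_line_config d M"
    and rk3: "mrank M {1..d} = 3"
    and x3: "x \<subseteq> {1..d}" "card x = 3" "x \<notin> circuits_size d M 3"
    and xs3: "\<forall>i\<in>{1..n}. xs i \<subseteq> {1..d} \<and> card (xs i) = 3 \<and> xs i \<notin> circuits_size d M 3"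
  shows "(\<forall>N. point_line_config d N \<and> dep_le d M N \<longrightarrow>
            (dep_le d (ext d M x) N \<longleftrightarrow> x \<in> circuits_size d N 3))
      \<and> ((n \<ge> 1 \<and>
          (\<forall>i\<in>{1..n}. (if i = n then xs 1 else xs (i + 1)) \<in> circuits_size d (ext d M (xs i)) 3) \<and>
          (\<forall>y\<in>circuits_size d (ext d M (xs n)) 3. y \<in> circuits_size d M 3 \<union> xs ` {1..n}))
         \<longrightarrow> minimal_in d (ext d M (xs n))
               {N. matroid d N \<and> dep_lt d M N \<and> circuits_size d N 1 = {} \<and> circuits_size d N 2 = {}})"
proof -
  have "dep_le d (ext d M x) N \<longleftrightarrow> x \<in> circuits_size d N 3"
    if "point_line_config d N" "dep_le d M N" for N
    using dep_le_ext_iff[OF x3(1,2) that] .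
  moreover have "minimal_in d (ext d M (xs n))
      {N. matroid d N \<and> dep_lt d M N \<and> circuits_size d N 1 = {} \<and> circuits_size d N 2 = {}}"
    if n: "1 \<le> n"
      and cycle: "\<forall>i\<in>{1..n}. (if i = n then xs 1 else xs (i + 1)) \<in> circuits_size d (ext d M (xs i)) 3"
      and closure: "\<forall>y\<in>circuits_size d (ext d M (xs n)) 3. y \<in> circuits_size d M 3 \<union> xs ` {1..n}"
  proof (rule ext_minimal_in[OF plcM n])
    show "xs i \<subseteq> {1..d} \<and> card (xs i) = 3" if "i \<in> {1..n}" for i
      using xs3 that by blast
    show "xs n \<notin> circuits_size d M 3" using xs3 n by simp
    show "xs (Suc i) \<in> circuits_size d (ext d M (xs i)) 3" if "i \<in> {1..<n}" for i
    proof -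
      from that have "i \<in> {1..n}" "i \<noteq> n" by auto
      with cycle show ?thesis by fastforce
    qed
  qed (use closure in blast)
  ultimately show ?thesis by blast
qed

end
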